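(* Let $k\geq1$ and $n\geq 2k$. Let $\mathcal{S}$ be an antichain of $\mathcal{F}=\mathcal{F}_{2k}^{[1,n]}$ that contains the set $[1,2]\cup[n-2k+3,n]$. Then $B_{\mathcal{S}}$ has exactly $\binom{n-k-1}{k-1}$ facets. Equivalently, in the poset $\mathcal{P}=\{(x_1,\dots,x_k): 1\leq x_1<\dots<x_k\leq n-k\}\subseteq\mathbb{N}^k$ (ordered componentwise), if $\mathcal{A}$ is an antichain containing $G=(1,n-2k+2,n-2k+3,\dots,n-k)$, then $|\mathcal{P}(\mathcal{A})\setminus\mathcal{P}(\mathcal{A}-\mathbf{1}_k)|=|\mathcal{P}(\{G\})|=\binom{n-k-1}{k-1}$.
   Context: Notation: $[m,n]=\{m,\dots,n\}$; $2k$-subsets of $[n]$ are identified with increasing vectors, and $\leq_p$ is the componentwise order. $\mathcal{F}_{2k}^{[1,n]}$ is the set of sets $\{i_1,i_1+1,\dots,i_k,i_k+1\}$ with $1\leq i_1$, $i_k\leq n-1$, $i_j\leq i_{j+1}-2$, ordered by $\leq_p$. $\mathcal{F}(\mathcal{S})$ is the order ideal generated by an antichain $\mathcal{S}$, $B(\mathcal{S})$ the pure complex whose facets are the sets of $\mathcal{F}(\mathcal{S})$, $\mathcal{S}-\mathbf{1}_{2k}=\{x-\mathbf{1}_{2k}: x\in\mathcal{S},\min x>1\}$, and $B_{\mathcal{S}}$ is the complex generated by the facets of $B(\mathcal{S})$ that are not facets of $B(\mathcal{S}-\mathbf{1}_{2k})$. Similarly, for an antichain $\mathcal{A}$ of $\mathcal{P}$,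 $\mathcal{P}(\mathcal{A})$ is the order ideal it generates and $\mathcal{A}-\mathbf{1}_k=\{x-\mathbf{1}_k: x\in\mathcal{A}, x_1>1\}$. The two formulations correspond under the poset isomorphism $R:\mathcal{P}\to\mathcal{F}$, $(x_1,\dots,x_k)\mapsto\{x_1,x_1+1,x_2+1,x_2+2,\dots,x_k+k-1,x_k+k\}$. *)

theory Defs
  imports Main
begin

definition leq_p :: "nat set \<Rightarrow> nat set \<Rightarrow> bool" where
  "leq_p A B \<longleftrightarrow> card A = card B \<and>
     (\<forall>j < card A. sorted_list_of_set A ! j \<le> sorted_list_of_set B ! j)"

text \<open>The family F_{2k}^{[1,n]}: unions of k pairwise separated dominoes {i_j, i_j+1}.\<close>
definition Ffam :: "nat \<Rightarrow> nat \<Rightarrow> nat set set" where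
  "Ffam k n = {(\<Union>j<k. {i j, i j + 1}) | i :: nat \<Rightarrow> nat.
      (\<forall>j<k. 1 \<le> i j \<and> i j \<le> n - 1) \<and> (\<forall>j. j + 1 < k \<longrightarrow> i j + 2 \<le> i (j + 1))}"

definition F_antichain :: "nat \<Rightarrow> nat \<Rightarrow> nat set set \<Rightarrow> bool" where
  "F_antichain k n S \<longleftrightarrow> S \<subseteq> Ffam k n \<and>
     (\<forall>A\<in>S. \<forall>B\<in>S. leq_p A B \<longrightarrow> A = B)"

definition F_ideal :: "nat \<Rightarrow> nat \<Rightarrow> nat set set \<Rightarrow> nat set set" where
  "F_ideal k n S = {A \<in> Ffam k n. \<exists>B\<in>S. leq_p A B}"

definition F_shift :: "nat set set \<Rightarrow> nat set set" where
  "F_shift S = {(\<lambda>x. x - 1) ` A | A. A \<in> S \<and> Min A > 1}"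

definition gen_complex :: "nat set set \<Rightarrow> nat set set" where
  "gen_complex G = {\<sigma>. \<exists>A\<in>G. \<sigma> \<subseteq> A}"

definition facets :: "nat set set \<Rightarrow> nat set set" where
  "facets K = {\<sigma> \<in> K. \<forall>\<tau>\<in>K. \<sigma> \<subseteq> \<tau> \<longrightarrow> \<tau> = \<sigma>}"

definition B_cx :: "nat \<Rightarrow> nat \<Rightarrow> nat set set \<Rightarrow> nat set set" where
  "B_cx k n S = gen_complex (F_ideal k n S)"

definition B_sub :: "nat \<Rightarrow> nat \<Rightarrow> nat set set \<Rightarrow> nat set set" where
  "B_sub k n S = gen_complex
     {A \<in> facets (B_cx k n S). A \<notin> facets (B_cx k n (F_shift S))}"

definition Pposet :: "nat \<Rightarrow> nat \<Rightarrow> nat list set" where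
  "Pposet k n = {xs. length xs = k \<and> sorted_wrt (<) xs \<and> (\<forall>x\<in>set xs. 1 \<le> x \<and> x \<le> n - k)}"

definition leq_P :: "nat list \<Rightarrow> nat list \<Rightarrow> bool" where
  "leq_P xs ys \<longleftrightarrow> list_all2 (\<le>) xs ys"

definition P_antichain :: "nat \<Rightarrow> nat \<Rightarrow> nat list set \<Rightarrow> bool" where
  "P_antichain k n A \<longleftrightarrow> A \<subseteq> Pposet k n \<and>
     (\<forall>x\<in>A. \<forall>y\<in>A. leq_P x y \<longrightarrow> x = y)"

definition P_ideal :: "nat \<Rightarrow> nat \<Rightarrow> nat list set \<Rightarrow> nat list set" where
  "P_ideal k n A = {x \<in> Pposet k n. \<exists>a\<in>A. leq_P x a}"

definition P_shift :: "nat list set \<Rightarrow> nat list set" where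
  "P_shift A = {map (\<lambda>x. x - 1) a | a. a \<in> A \<and> a \<noteq> [] \<and> hd a > 1}"

definition Gvec :: "nat \<Rightarrow> nat \<Rightarrow> nat list" where
  "Gvec k n = 1 # [n - 2*k + 2 ..< n - k + 1]"

end

theory Submission
  imports Defs
begin

text \<open>Let \<open>I = P(A)\<close>. Since \<open>x \<in> P(A - 1\<^sub>k)\<close> iff \<open>x + 1\<^sub>k \<in> I\<close>, the set
  \<open>P(A) - P(A - 1\<^sub>k)\<close> consists of those \<open>x \<in> I\<close> with \<open>x + 1\<^sub>k \<notin> I\<close>.  Adding \<open>1\<^sub>k\<close> is a
  bijection from the remaining elements of \<open>I\<close> onto the elements of \<open>I\<close> with first
  coordinate \<open>> 1\<close>, so the difference has as many elements as \<open>{x \<in> I. x\<^sub>1 = 1}\<close>.  When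
  \<open>G \<in> A\<close> this is all of \<open>P({G})\<close>, the vectors with \<open>x\<^sub>1 = 1\<close>, which correspond to the
  \<open>(k-1)\<close>-subsets of \<open>[2, n-k]\<close>.  The map \<open>R\<close> is an isomorphism of posets \<open>P \<cong> F\<close>
  commuting with the shift, and the facets of a complex generated by sets of equal size
  are exactly the generators, so the statement about \<open>B\<^sub>S\<close> is the same count.\<close>

section \<open>The poset of increasing vectors\<close>

lemma finite_Pposet: "finite (Pposet k n)"
proof (rule finite_subset)
  show "Pposet k n \<subseteq> {xs. set xs \<subseteq> {1..n-k} \<and> length xs = k}"
    unfolding Pposet_def by auto
  show "finite {xs. set xs \<subseteq> {1..n-k} \<and> length xs = k}"
    by (rule finite_lists_length_eq) simp
qed

lemma Pposet_iff_nth: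
  "xs \<in> Pposet k n \<longleftrightarrow> length xs = k \<and> (\<forall>i j. i < j \<longrightarrow> j < k \<longrightarrow> xs!i < xs!j)
     \<and> (\<forall>i<k. 1 \<le> xs!i \<and> xs!i \<le> n - k)"
  unfolding Pposet_def sorted_wrt_iff_nth_less by (auto simp: all_set_conv_all_nth)

lemma Pposet_sorted: "xs \<in> Pposet k n \<Longrightarrow> sorted_wrt (<) xs"
  unfolding Pposet_def by auto

lemma leq_P_iff_nth: "leq_P xs ys \<longleftrightarrow> length xs = length ys \<and> (\<forall>i<length xs. xs!i \<le> ys!i)"
  unfolding leq_P_def list_all2_conv_all_nth by auto

lemma leq_P_trans: "leq_P xs ys \<Longrightarrow> leq_P ys zs \<Longrightarrow> leq_P xs zs"
  unfolding leq_P_iff_nth by (metis le_trans)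

lemma sorted_wrt_less_nth_gap:
  "sorted_wrt (<) xs \<Longrightarrow> i \<le> j \<Longrightarrow> j < length xs \<Longrightarrow> xs!i + (j - i) \<le> xs!j"
proof (induction j)
  case 0
  then show ?case by simp
next
  case (Suc j)
  show ?case
  proof (cases "i = Suc j")
    case False
    then have "xs!i + (j - i) \<le> xs!j" using Suc by simp
    moreover have "xs!j < xs!Suc j" using Suc.prems by (simp add: sorted_wrt_iff_nth_less)
    ultimately show ?thesis using False Suc.prems by linarith
  qed simp
qed

lemma Pposet_nth_upper:
  assumes "xs \<in> Pposet k n" and "i < k"
  shows "xs!i + (k - 1 - i) \<le> n - k"
proof -
  have "xs!i + (k - 1 - i) \<le> xs!(k - 1)"
    using sorted_wrt_less_nth_gap[OF Pposet_sorted[OF assms(1)], of i "k - 1"] assms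
    by (simp add: Pposet_def)
  also have "xs!(k - 1) \<le> n - k" using assms unfolding Pposet_iff_nth by auto
  finally show ?thesis .
qed

lemma P_ideal_subset: "P_ideal k n A \<subseteq> Pposet k n"
  unfolding P_ideal_def by auto

lemma P_ideal_downward:
  "y \<in> P_ideal k n A \<Longrightarrow> x \<in> Pposet k n \<Longrightarrow> leq_P x y \<Longrightarrow> x \<in> P_ideal k n A"
  unfolding P_ideal_def using leq_P_trans by blast

lemma map_pred_Pposet:
  assumes a: "a \<in> Pposet k n" and hd: "hd a > 1" and k: "k \<ge> 1"
  shows "map (\<lambda>t. t - 1) a \<in> Pposet k n"
proof -
  have len: "length a = k" using a unfolding Pposet_iff_nth by auto
  have "a!0 > 1" using hd len k by (cases a) auto
  then have gt1: "a!i > 1" if "i < k" for i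
  proof (cases "i = 0")
    case False
    then have "a!0 < a!i" using a that unfolding Pposet_iff_nth by simp
    then show ?thesis using \<open>a!0 > 1\<close> by simp
  qed simp
  have "a!i - 1 < a!j - 1" if "i < j" "j < k" for i j
    using a that gt1[of i] unfolding Pposet_iff_nth by (simp add: diff_less_mono)
  moreover have "1 \<le> a!i - 1 \<and> a!i - 1 \<le> n - k" if "i < k" for i
    using a that gt1[of i] unfolding Pposet_iff_nth by auto
  ultimately show ?thesis using len unfolding Pposet_iff_nth by simp
qed

lemma P_shift_subset: "k \<ge> 1 \<Longrightarrow> A \<subseteq> Pposet k n \<Longrightarrow> P_shift A \<subseteq> Pposet k n"
  unfolding P_shift_def using map_pred_Pposet by blast

lemma map_Suc_map_pred: "\<forall>t\<in>set xs. 1 \<le> t \<Longrightarrow> map Suc (map (\<lambda>t. t - 1) xs) = xs"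
  by (induction xs) auto

lemma P_ideal_P_shift_iff:
  assumes A: "A \<subseteq> Pposet k n" and x: "x \<in> Pposet k n" and k: "k \<ge> 1"
  shows "x \<in> P_ideal k n (P_shift A) \<longleftrightarrow> map Suc x \<in> P_ideal k n A"
proof
  assume "x \<in> P_ideal k n (P_shift A)"
  then obtain a where a: "a \<in> A" "leq_P x (map (\<lambda>t. t - 1) a)"
    unfolding P_ideal_def P_shift_def by auto
  have aP: "a \<in> Pposet k n" using a A by auto
  have le: "Suc (x!i) \<le> a!i" if "i < k" for i
    using a(2) aP x that unfolding leq_P_iff_nth Pposet_iff_nth by fastforce
  have "map Suc x \<in> Pposet k n"
    using x aP le unfolding Pposet_iff_nth by (auto, fastforce)
  moreover have "leq_P (map Suc x) a" using le x aP unfolding leq_P_iff_nth Pposet_iff_nth by auto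
  ultimately show "map Suc x \<in> P_ideal k n A" using a unfolding P_ideal_def by auto
next
  assume "map Suc x \<in> P_ideal k n A"
  then obtain a where a: "a \<in> A" "leq_P (map Suc x) a"
    unfolding P_ideal_def by auto
  have aP: "a \<in> Pposet k n" using a A by auto
  have le: "Suc (x!i) \<le> a!i" if "i < k" for i
    using a(2) aP x that unfolding leq_P_iff_nth Pposet_iff_nth by fastforce
  have ne: "a \<noteq> []" using aP k unfolding Pposet_iff_nth by auto
  have "1 \<le> x!0" using x k unfolding Pposet_iff_nth by simp
  then have "hd a > 1" using le[of 0] k ne by (simp add: hd_conv_nth)
  then have "map (\<lambda>t. t - 1) a \<in> P_shift A" using a ne unfolding P_shift_def by auto
  moreover have "leq_P x (map (\<lambda>t. t - 1) a)"
    using le x aP unfolding leq_P_iff_nth Pposet_iff_nth by fastforce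
  ultimately show "x \<in> P_ideal k n (P_shift A)" using x unfolding P_ideal_def by auto
qed

lemma card_P_ideal_diff_P_shift:
  assumes A: "A \<subseteq> Pposet k n" and k: "k \<ge> 1"
  shows "card (P_ideal k n A - P_ideal k n (P_shift A)) = card {y \<in> P_ideal k n A. y!0 = 1}"
proof -
  let ?I = "P_ideal k n A"
  let ?E = "{x \<in> ?I. map Suc x \<in> ?I}"
  let ?H = "{y \<in> ?I. y!0 \<noteq> 1}"
  have fin: "finite ?I" using finite_subset[OF P_ideal_subset finite_Pposet] .
  have diff: "?I - P_ideal k n (P_shift A) = {x \<in> ?I. map Suc x \<notin> ?I}"
    using P_ideal_P_shift_iff[OF A _ k] P_ideal_subset by blast
  have "bij_betw (map Suc) ?E ?H"
  proof (rule bij_betw_byWitness[where f' = "map (\<lambda>t. t - 1)"])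
    show "\<forall>x\<in>?E. map (\<lambda>t. t - 1) (map Suc x) = x" by (simp add: map_idI)
    show "map Suc ` ?E \<subseteq> ?H"
      using P_ideal_subset k by (force simp: Pposet_iff_nth)
    show "\<forall>y\<in>?H. map Suc (map (\<lambda>t. t - 1) y) = y"
      using P_ideal_subset map_Suc_map_pred unfolding Pposet_def by blast
    show "map (\<lambda>t. t - 1) ` ?H \<subseteq> ?E"
    proof
      fix x assume "x \<in> map (\<lambda>t. t - 1) ` ?H"
      then obtain y where y: "y \<in> ?I" "y!0 \<noteq> 1" and x: "x = map (\<lambda>t. t - 1) y" by auto
      have yP: "y \<in> Pposet k n" using y P_ideal_subset by auto
      then have "y \<noteq> []" and "\<forall>t\<in>set y. 1 \<le> t" using k unfolding Pposet_def by auto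
      then have "hd y > 1" using y(2) by (cases y) auto
      then have "x \<in> Pposet k n" using map_pred_Pposet[OF yP _ k] x by simp
      moreover have "leq_P x y" using x unfolding leq_P_iff_nth by auto
      ultimately have "x \<in> ?I" using P_ideal_downward y(1) by blast
      moreover have "map Suc x = y" using x map_Suc_map_pred \<open>\<forall>t\<in>set y. 1 \<le> t\<close> by simp
      ultimately show "x \<in> ?E" using y by auto
    qed
  qed
  then have "card ?E = card ?H" by (rule bij_betw_same_card)
  moreover have "card ?I = card {x \<in> ?I. map Suc x \<notin> ?I} + card ?E"
    using fin by (subst card_Un_disjoint[symmetric]) (auto intro: arg_cong[where f = card])
  moreover have "card ?I = card {y \<in> ?I. y!0 = 1} + card ?H"
    using fin by (subst card_Un_disjoint[symmetric]) (auto intro: arg_cong[where f = card])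
  ultimately show ?thesis using diff by simp
qed

lemma Gvec_eq_upt:
  assumes "n \<ge> 2*k" "k \<ge> 1"
  shows "Gvec k n = 1 # [n-2*k+2 ..< (n-2*k+2)+(k-1)]"
proof -
  have "n - k + 1 = (n-2*k+2)+(k-1)" using assms by arith
  then show ?thesis unfolding Gvec_def by (simp only:)
qed

lemma length_Gvec: "n \<ge> 2*k \<Longrightarrow> k \<ge> 1 \<Longrightarrow> length (Gvec k n) = k"
  by (simp add: Gvec_eq_upt del: upt_Suc)

lemma Gvec_nth_0: "Gvec k n ! 0 = 1"
  unfolding Gvec_def by simp

lemma Gvec_nth:
  assumes "n \<ge> 2*k" "k \<ge> 1" "0 < i" "i < k"
  shows "Gvec k n ! i = n - 2*k + 1 + i"
proof -
  obtain j where j: "i = Suc j" using assms(3) by (cases i) auto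
  then have "Gvec k n ! i = [n-2*k+2 ..< (n-2*k+2)+(k-1)] ! j"
    using assms by (simp add: Gvec_eq_upt del: upt_Suc)
  also have "\<dots> = n-2*k+2 + j" using assms j by (subst nth_upt) auto
  finally show ?thesis using j by simp
qed

lemma Gvec_Pposet:
  assumes n: "n \<ge> 2*k" and k: "k \<ge> 1"
  shows "Gvec k n \<in> Pposet k n"
proof -
  have "Gvec k n ! i < Gvec k n ! j" if "i < j" "j < k" for i j
    using that Gvec_nth[OF n k, of i] Gvec_nth[OF n k, of j] Gvec_nth_0[of k n] n
    by (cases "i = 0") auto
  moreover have "1 \<le> Gvec k n ! i \<and> Gvec k n ! i \<le> n - k" if "i < k" for i
    using that Gvec_nth[OF n k, of i] Gvec_nth_0[of k n] n by (cases "i = 0") auto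
  ultimately show ?thesis unfolding Pposet_iff_nth using length_Gvec[OF n k] by auto
qed

lemma leq_P_Gvec_iff:
  assumes y: "y \<in> Pposet k n" and k: "k \<ge> 1" and n: "n \<ge> 2*k"
  shows "leq_P y (Gvec k n) \<longleftrightarrow> y!0 = 1"
proof
  assume "leq_P y (Gvec k n)"
  then show "y!0 = 1"
    using y k unfolding leq_P_iff_nth Pposet_iff_nth by (metis Gvec_nth_0 le_antisym less_le_trans zero_less_one)
next
  assume y0: "y!0 = 1"
  have "y!i \<le> Gvec k n ! i" if i: "i < k" for i
  proof (cases "i = 0")
    case False
    then show ?thesis using Pposet_nth_upper[OF y i] Gvec_nth[OF n k _ i] by simp
  qed (simp add: y0 Gvec_nth_0)
  then show "leq_P y (Gvec k n)"
    using y length_Gvec[OF n k] unfolding leq_P_iff_nth Pposet_iff_nth by auto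
qed

lemma P_ideal_Gvec:
  "k \<ge> 1 \<Longrightarrow> n \<ge> 2*k \<Longrightarrow> P_ideal k n {Gvec k n} = {y \<in> Pposet k n. y!0 = 1}"
  unfolding P_ideal_def using leq_P_Gvec_iff by auto

lemma sorted_list_of_set_strict: "sorted_wrt (<) xs \<Longrightarrow> sorted_list_of_set (set xs) = xs"
  by (simp add: strict_sorted_iff sorted_list_of_set.idem_if_sorted_distinct)

lemma bij_betw_Pposet_nth_0_eq_1_subsets:
  assumes k: "k \<ge> 1" and n: "n \<ge> 2*k"
  shows "bij_betw (\<lambda>y. set (tl y)) {y \<in> Pposet k n. y!0 = 1} {T. T \<subseteq> {2..n-k} \<and> card T = k - 1}"
    (is "bij_betw _ ?X ?Y")
proof (rule bij_betw_byWitness[where f' = "\<lambda>T. 1 # sorted_list_of_set T"])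
  show "\<forall>y\<in>?X. 1 # sorted_list_of_set (set (tl y)) = y"
  proof
    fix y assume y: "y \<in> ?X"
    then obtain a ys where "y = a # ys" using k unfolding Pposet_def by (cases y) auto
    then show "1 # sorted_list_of_set (set (tl y)) = y"
      using y sorted_list_of_set_strict[of ys] by (auto simp: Pposet_def)
  qed
  show "\<forall>T\<in>?Y. set (tl (1 # sorted_list_of_set T)) = T"
    using finite_subset by fastforce
  show "(\<lambda>y. set (tl y)) ` ?X \<subseteq> ?Y"
  proof
    fix T assume "T \<in> (\<lambda>y. set (tl y)) ` ?X"
    then obtain y where y: "y \<in> Pposet k n" "y!0 = 1" and T: "T = set (tl y)" by auto
    have len: "length y = k" and sw: "sorted_wrt (<) y" using y unfolding Pposet_def by auto
    have "T \<subseteq> {2..n-k}"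
    proof
      fix t assume "t \<in> T"
      then obtain i where "i < k - 1" "t = tl y ! i"
        using T len by (auto simp: in_set_conv_nth)
      then have "Suc i < k" "t = y ! Suc i" using len by (auto simp: nth_tl)
      then show "t \<in> {2..n-k}" using y unfolding Pposet_iff_nth by force
    qed
    moreover have "card T = k - 1" using T len sw
      by (simp add: distinct_card strict_sorted_iff distinct_tl)
    ultimately show "T \<in> ?Y" by auto
  qed
  show "(\<lambda>T. 1 # sorted_list_of_set T) ` ?Y \<subseteq> ?X"
  proof
    fix y assume "y \<in> (\<lambda>T. 1 # sorted_list_of_set T) ` ?Y"
    then obtain T where T: "T \<subseteq> {2..n-k}" "card T = k - 1" "y = 1 # sorted_list_of_set T"
      by auto
    have "finite T" using T(1) finite_subset by blast
    then show "y \<in> ?X" using T k n unfolding Pposet_def by auto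
  qed
qed

lemma card_Pposet_nth_0_eq_1:
  assumes k: "k \<ge> 1" and n: "n \<ge> 2*k"
  shows "card {y \<in> Pposet k n. y!0 = 1} = (n - k - 1) choose (k - 1)"
proof -
  have "card {y \<in> Pposet k n. y!0 = 1} = card {T. T \<subseteq> {2..n-k} \<and> card T = k - 1}"
    by (rule bij_betw_same_card[OF bij_betw_Pposet_nth_0_eq_1_subsets[OF k n]])
  also have "\<dots> = card {2..n-k} choose (k - 1)" by (rule n_subsets) simp
  finally show ?thesis by simp
qed

theorem card_P_ideal_diff_P_shift_Gvec:
  assumes A: "A \<subseteq> Pposet k n" and G: "Gvec k n \<in> A" and k: "k \<ge> 1" and n: "n \<ge> 2*k"
  shows "card (P_ideal k n A - P_ideal k n (P_shift A)) = card (P_ideal k n {Gvec k n})"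
proof -
  have "{y \<in> P_ideal k n A. y!0 = 1} = P_ideal k n {Gvec k n}"
    using P_ideal_Gvec[OF k n] P_ideal_downward[of "Gvec k n" k n A] G
      P_ideal_subset leq_P_Gvec_iff[OF _ k n] Gvec_Pposet[OF n k]
    unfolding P_ideal_def by (auto simp: leq_P_iff_nth)
  then show ?thesis using card_P_ideal_diff_P_shift[OF A k] by simp
qed

section \<open>Transfer to unions of dominoes\<close>

text \<open>\<open>dominoes\<close> is the isomorphism \<open>R\<close>.  The offset \<open>d\<close> of \<open>domino_list\<close> records how far
  the current entry is displaced: the \<open>j\<close>-th entry contributes \<open>{x\<^sub>j + j, x\<^sub>j + j + 1}\<close>.\<close>

fun domino_list :: "nat \<Rightarrow> nat list \<Rightarrow> nat list" where
  "domino_list d [] = []"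
| "domino_list d (a # xs) = (a + d) # (a + d + 1) # domino_list (Suc d) xs"

definition dominoes :: "nat list \<Rightarrow> nat set" where
  "dominoes x = set (domino_list 0 x)"

lemma length_domino_list: "length (domino_list d x) = 2 * length x"
  by (induction d x rule: domino_list.induct) auto

lemma set_domino_list:
  "set (domino_list d x) = (\<Union>j<length x. {x!j + d + j, x!j + d + j + 1})"
proof (induction d x rule: domino_list.induct)
  case (2 d a xs)
  have "(\<Union>j<Suc (length xs). {(a # xs)!j + d + j, (a # xs)!j + d + j + 1})
      = {a + d, a + d + 1} \<union> (\<Union>j<length xs. {xs!j + Suc d + j, xs!j + Suc d + j + 1})"
    by (simp add: lessThan_Suc_eq_insert_0 UN_insert image_Suc_lessThan[symmetric])
  then show ?case using 2 by simp
qed simp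

lemma sorted_domino_list: "sorted_wrt (<) x \<Longrightarrow> sorted_wrt (<) (domino_list d x)"
proof (induction d x rule: domino_list.induct)
  case (2 d a xs)
  have "a + d + 1 < t" if t: "t \<in> set (domino_list (Suc d) xs)" for t
  proof -
    obtain j where "j < length xs" "xs!j + d + 1 \<le> t"
      using t unfolding set_domino_list by force
    moreover have "a < xs!j" if "j < length xs" for j using 2(2) that by simp
    ultimately show ?thesis by fastforce
  qed
  then show ?case using 2 by (auto intro: Suc_lessD)
qed simp

lemma domino_list_le_iff:
  "length x = length y \<Longrightarrow> list_all2 (\<le>) (domino_list d x) (domino_list d y) \<longleftrightarrow> list_all2 (\<le>) x y"
proof (induction d x arbitrary: y rule: domino_list.induct)
  case (2 d a xs)
  then obtain b ys where "y = b # ys" by (cases y) auto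
  then show ?case using 2 by auto
qed simp

lemma map_pred_domino_list:
  "\<forall>t\<in>set x. 1 \<le> t \<Longrightarrow> map (\<lambda>t. t - 1) (domino_list d x) = domino_list d (map (\<lambda>t. t - 1) x)"
  by (induction d x rule: domino_list.induct) auto

lemma sorted_list_of_dominoes: "x \<in> Pposet k n \<Longrightarrow> sorted_list_of_set (dominoes x) = domino_list 0 x"
  unfolding dominoes_def by (rule sorted_list_of_set_strict[OF sorted_domino_list[OF Pposet_sorted]])

lemma card_dominoes: "x \<in> Pposet k n \<Longrightarrow> card (dominoes x) = 2 * k"
  using sorted_domino_list[OF Pposet_sorted, of x k n 0]
  by (simp add: dominoes_def distinct_card strict_sorted_iff length_domino_list Pposet_def)

lemma leq_p_dominoes_iff:
  assumes x: "x \<in> Pposet k n" and y: "y \<in> Pposet k n"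
  shows "leq_p (dominoes x) (dominoes y) \<longleftrightarrow> leq_P x y"
proof -
  have len: "length x = k" "length y = k" using x y unfolding Pposet_def by auto
  have "leq_p (dominoes x) (dominoes y) \<longleftrightarrow> list_all2 (\<le>) (domino_list 0 x) (domino_list 0 y)"
    unfolding leq_p_def card_dominoes[OF x] card_dominoes[OF y]
      sorted_list_of_dominoes[OF x] sorted_list_of_dominoes[OF y] list_all2_conv_all_nth
    using len by (simp add: length_domino_list)
  also have "\<dots> \<longleftrightarrow> leq_P x y" unfolding leq_P_def using len by (simp add: domino_list_le_iff)
  finally show ?thesis .
qed

lemma inj_on_dominoes: "inj_on dominoes (Pposet k n)"
proof (rule inj_onI)
  fix x y assume x: "x \<in> Pposet k n" and y: "y \<in> Pposet k n" and e: "dominoes x = dominoes y"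
  have "leq_P x y" "leq_P y x"
    using leq_p_dominoes_iff[OF x y] leq_p_dominoes_iff[OF y x] e leq_p_def by auto
  then show "x = y" unfolding leq_P_iff_nth by (metis nth_equalityI le_antisym)
qed

lemma separated_gap:
  fixes i :: "nat \<Rightarrow> nat"
  assumes "\<forall>j. j + 1 < k \<longrightarrow> i j + 2 \<le> i (j + 1)"
  shows "j \<le> j' \<Longrightarrow> j' < k \<Longrightarrow> i j + 2 * (j' - j) \<le> i j'"
proof (induction j')
  case (Suc j')
  show ?case
  proof (cases "j = Suc j'")
    case False
    then have "i j + 2 * (j' - j) \<le> i j'" using Suc by simp
    moreover have "i j' + 2 \<le> i (Suc j')" using assms Suc.prems by auto
    ultimately show ?thesis using False Suc.prems by (simp add: Suc_diff_le)
  qed simp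
qed simp

text \<open>The inverse of \<open>R\<close> sends the dominoes starting at \<open>i\<^sub>0, i\<^sub>1, \<dots>\<close> to \<open>(i\<^sub>j - j)\<^sub>j\<close>.\<close>

lemma dominoes_image_Pposet: assumes k: "k \<ge> 1" shows "dominoes ` Pposet k n = Ffam k n"
proof
  show "dominoes ` Pposet k n \<subseteq> Ffam k n"
  proof
    fix X assume "X \<in> dominoes ` Pposet k n"
    then obtain x where x: "x \<in> Pposet k n" and X: "X = dominoes x" by auto
    define i where "i = (\<lambda>j. x!j + j)"
    have "X = (\<Union>j<k. {i j, i j + 1})"
      using x X unfolding dominoes_def set_domino_list i_def Pposet_def by simp
    moreover have "1 \<le> i j \<and> i j \<le> n - 1" if j: "j < k" for j
      using Pposet_nth_upper[OF x j] x j unfolding i_def Pposet_iff_nth by auto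
    moreover have "i j + 2 \<le> i (j + 1)" if "j + 1 < k" for j
      using x that unfolding Pposet_iff_nth i_def by fastforce
    ultimately show "X \<in> Ffam k n" unfolding Ffam_def by blast
  qed
next
  show "Ffam k n \<subseteq> dominoes ` Pposet k n"
  proof
    fix X assume "X \<in> Ffam k n"
    then obtain i where X: "X = (\<Union>j<k. {i j, i j + 1})"
      and bounds: "\<forall>j<k. 1 \<le> i j \<and> i j \<le> n - 1"
      and gap: "\<forall>j. j + 1 < k \<longrightarrow> i j + 2 \<le> i (j + 1)"
      unfolding Ffam_def by blast
    note gaps = separated_gap[OF gap]
    define x where "x = map (\<lambda>j. i j - j) [0..<k]"
    have ij: "j \<le> i j" if "j < k" for j using gaps[of 0 j] bounds that by auto
    have "x!a < x!b" if "a < b" "b < k" for a b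
      using that gaps[of a b] ij[of a] unfolding x_def by auto
    moreover have "1 \<le> x!j \<and> x!j \<le> n - k" if j: "j < k" for j
    proof -
      have "i j + 2 * (k - 1 - j) \<le> i (k - 1)" "i 0 + 2 * j \<le> i j"
        using gaps[of j "k - 1"] gaps[of 0 j] j by auto
      moreover have "i (k - 1) \<le> n - 1" "1 \<le> i 0" using bounds k by auto
      ultimately show ?thesis unfolding x_def using j by auto
    qed
    ultimately have "x \<in> Pposet k n" unfolding Pposet_iff_nth x_def by simp
    moreover have "dominoes x = X"
      unfolding dominoes_def set_domino_list X x_def using ij by auto
    ultimately show "X \<in> dominoes ` Pposet k n" by blast
  qed
qed

lemma card_Ffam:
  assumes k: "k \<ge> 1" and X: "X \<in> Ffam k n"
  shows "finite X \<and> card X = 2 * k"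
proof -
  obtain x where "x \<in> Pposet k n" "X = dominoes x"
    using X dominoes_image_Pposet[OF k] by blast
  then show ?thesis using card_dominoes by (simp add: dominoes_def)
qed

lemma F_ideal_dominoes:
  assumes k: "k \<ge> 1" and B: "B \<subseteq> Pposet k n"
  shows "F_ideal k n (dominoes ` B) = dominoes ` P_ideal k n B"
proof -
  have "F_ideal k n (dominoes ` B) = {X \<in> dominoes ` Pposet k n. \<exists>b\<in>B. leq_p X (dominoes b)}"
    unfolding F_ideal_def dominoes_image_Pposet[OF k] by auto
  also have "\<dots> = dominoes ` {x \<in> Pposet k n. \<exists>b\<in>B. leq_p (dominoes x) (dominoes b)}"
    by auto
  also have "\<dots> = dominoes ` P_ideal k n B"
    unfolding P_ideal_def using leq_p_dominoes_iff B by blast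
  finally show ?thesis .
qed

lemma Min_dominoes:
  assumes k: "k \<ge> 1" and x: "x \<in> Pposet k n"
  shows "Min (dominoes x) = hd x"
proof -
  obtain a xs where "x = a # xs" using x k unfolding Pposet_def by (cases x) auto
  moreover have "sorted_wrt (<) (domino_list 0 x)"
    by (rule sorted_domino_list[OF Pposet_sorted[OF x]])
  ultimately show ?thesis unfolding dominoes_def by (auto intro!: Min_eqI)
qed

lemma image_pred_dominoes:
  "x \<in> Pposet k n \<Longrightarrow> (\<lambda>t. t - 1) ` dominoes x = dominoes (map (\<lambda>t. t - 1) x)"
  unfolding dominoes_def Pposet_def using map_pred_domino_list[of x 0]
  by (metis (no_types, lifting) list.set_map mem_Collect_eq)

lemma F_shift_dominoes:
  assumes k: "k \<ge> 1" and A: "A \<subseteq> Pposet k n"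
  shows "F_shift (dominoes ` A) = dominoes ` P_shift A"
proof (intro set_eqI iffI)
  fix X assume "X \<in> F_shift (dominoes ` A)"
  then obtain a where a: "a \<in> A" "Min (dominoes a) > 1" "X = (\<lambda>t. t - 1) ` dominoes a"
    unfolding F_shift_def by blast
  have aP: "a \<in> Pposet k n" using a A by blast
  then have "a \<noteq> []" using k unfolding Pposet_def by auto
  then have "map (\<lambda>t. t - 1) a \<in> P_shift A"
    unfolding P_shift_def using a Min_dominoes[OF k aP] by auto
  moreover have "X = dominoes (map (\<lambda>t. t - 1) a)" using a(3) image_pred_dominoes[OF aP] by simp
  ultimately show "X \<in> dominoes ` P_shift A" by blast
next
  fix X assume "X \<in> dominoes ` P_shift A"
  then obtain a where a: "a \<in> A" "hd a > 1" "X = dominoes (map (\<lambda>t. t - 1) a)"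
    unfolding P_shift_def by blast
  have aP: "a \<in> Pposet k n" using a A by blast
  have "X = (\<lambda>t. t - 1) ` dominoes a" using a(3) image_pred_dominoes[OF aP] by simp
  moreover have "Min (dominoes a) > 1" using a Min_dominoes[OF k aP] by simp
  ultimately show "X \<in> F_shift (dominoes ` A)" unfolding F_shift_def using a(1) by blast
qed

lemma facets_gen_complex_uniform:
  assumes "\<forall>A\<in>G. finite A \<and> card A = c"
  shows "facets (gen_complex G) = G"
proof
  show "facets (gen_complex G) \<subseteq> G"
    unfolding facets_def gen_complex_def by auto
  show "G \<subseteq> facets (gen_complex G)"
  proof
    fix A assume A: "A \<in> G"
    have "\<tau> = A" if "B \<in> G" "A \<subseteq> \<tau>" "\<tau> \<subseteq> B" for \<tau> B
      using that A assms card_subset_eq[of B A] by auto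
    then show "A \<in> facets (gen_complex G)"
      using A unfolding facets_def gen_complex_def by blast
  qed
qed

lemma set_domino_list_upt: "set (domino_list d [c..<c + r]) = {c + d..<c + d + 2 * r}"
proof (induction r arbitrary: c d)
  case (Suc r)
  have "[c..<c + Suc r] = c # [Suc c..<Suc c + r]" by (subst upt_rec) (simp del: upt_Suc)
  then have "set (domino_list d [c..<c + Suc r])
      = insert (c + d) (insert (c + d + 1) {Suc c + Suc d..<Suc c + Suc d + 2*r})"
    by (simp only: domino_list.simps list.set Suc.IH)
  also have "\<dots> = {c + d..<c + d + 2 * Suc r}" by auto
  finally show ?case .
qed simp

lemma dominoes_Gvec:
  assumes n: "n \<ge> 2*k" and k: "k \<ge> 1"
  shows "dominoes (Gvec k n) = {1, 2} \<union> {n - 2*k + 3 .. n}"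
proof -
  have "dominoes (Gvec k n) = {1, 2} \<union> set (domino_list 1 [n-2*k+2 ..< (n-2*k+2)+(k-1)])"
    unfolding dominoes_def Gvec_eq_upt[OF n k] by (simp add: numeral_2_eq_2 del: upt_Suc)
  also have "\<dots> = {1, 2} \<union> {n-2*k+2+1 ..< n-2*k+2+1+2*(k-1)}"
    unfolding set_domino_list_upt ..
  also have "n-2*k+2+1+2*(k-1) = Suc n" using n k by arith
  also have "n-2*k+2+1 = n-2*k+3" by simp
  finally show ?thesis by (simp only: atLeastLessThanSuc_atLeastAtMost)
qed

lemma dominoes_preimage:
  assumes k: "k \<ge> 1" and S: "S \<subseteq> Ffam k n"
  shows "S = dominoes ` {x \<in> Pposet k n. dominoes x \<in> S}"
proof (intro equalityI subsetI)
  fix X assume X: "X \<in> S"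
  then obtain x where "x \<in> Pposet k n" "X = dominoes x"
    using S dominoes_image_Pposet[OF k] by (metis imageE subsetD)
  then show "X \<in> dominoes ` {x \<in> Pposet k n. dominoes x \<in> S}" using X by blast
qed auto

lemma facets_B_sub_dominoes:
  assumes k: "k \<ge> 1" and A: "A \<subseteq> Pposet k n"
  shows "facets (B_sub k n (dominoes ` A))
           = dominoes ` (P_ideal k n A - P_ideal k n (P_shift A))"
proof -
  have uniform: "\<forall>X\<in>F_ideal k n T - U. finite X \<and> card X = 2 * k" for T U
    using card_Ffam[OF k] unfolding F_ideal_def by blast
  have facets_B: "facets (B_cx k n T) = F_ideal k n T" for T
    unfolding B_cx_def using facets_gen_complex_uniform uniform[of T "{}"] by simp
  have "facets (B_sub k n (dominoes ` A))
      = F_ideal k n (dominoes ` A) - F_ideal k n (F_shift (dominoes ` A))"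
    unfolding B_sub_def facets_B set_diff_eq[symmetric] by (rule facets_gen_complex_uniform[OF uniform])
  also have "\<dots> = dominoes ` P_ideal k n A - dominoes ` P_ideal k n (P_shift A)"
    unfolding F_shift_dominoes[OF k A] F_ideal_dominoes[OF k A]
      F_ideal_dominoes[OF k P_shift_subset[OF k A]] ..
  also have "\<dots> = dominoes ` (P_ideal k n A - P_ideal k n (P_shift A))"
    using inj_on_image_set_diff[OF inj_on_dominoes] P_ideal_subset by (metis Diff_subset subset_trans)
  finally show ?thesis .
qed

theorem lemma3p13:
  fixes k n :: nat
  assumes "k \<ge> 1" and "n \<ge> 2 * k"
  shows "(\<forall>S. F_antichain k n S \<and> {1, 2} \<union> {n - 2*k + 3 .. n} \<in> S \<longrightarrow>
            card (facets (B_sub k n S)) = (n - k - 1) choose (k - 1))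
       \<and> (\<forall>A. P_antichain k n A \<and> Gvec k n \<in> A \<longrightarrow>
            card (P_ideal k n A - P_ideal k n (P_shift A)) = card (P_ideal k n {Gvec k n})
          \<and> card (P_ideal k n {Gvec k n}) = (n - k - 1) choose (k - 1))"
proof -
  note k = assms(1) and n = assms(2)
  have card_G: "card (P_ideal k n {Gvec k n}) = (n - k - 1) choose (k - 1)"
    unfolding P_ideal_Gvec[OF k n] by (rule card_Pposet_nth_0_eq_1[OF k n])
  have "card (facets (B_sub k n S)) = (n - k - 1) choose (k - 1)"
    if S_antichain: "F_antichain k n S" and G: "{1, 2} \<union> {n - 2*k + 3 .. n} \<in> S" for S
  proof -
    define A where "A = {x \<in> Pposet k n. dominoes x \<in> S}"
    have S: "S = dominoes ` A"
      using dominoes_preimage[OF k] S_antichain unfolding A_def F_antichain_def by blast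
    have AP: "A \<subseteq> Pposet k n" and GA: "Gvec k n \<in> A"
      using G dominoes_Gvec[OF n k] Gvec_Pposet[OF n k] unfolding A_def by auto
    have "card (facets (B_sub k n S)) = card (P_ideal k n A - P_ideal k n (P_shift A))"
      unfolding S facets_B_sub_dominoes[OF k AP]
      by (rule card_image[OF inj_on_subset[OF inj_on_dominoes]]) (use P_ideal_subset in blast)
    then show ?thesis using card_P_ideal_diff_P_shift_Gvec[OF AP GA k n] card_G by simp
  qed
  then show ?thesis
    using card_G card_P_ideal_diff_P_shift_Gvec[OF _ _ k n] unfolding P_antichain_def by blast
qed

end
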